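(* Let $\theta\in\mathbb{R}$, let $\mathcal{A}_\theta$ be the smooth noncommutative torus, let $\tau\in\mathbb{C}$ with $\Im\tau>0$, and let $p\in\mathcal{A}_\theta$ be a projection ($p=p^2=p^*$) satisfying at least one of the equations $$\bar{\partial}_{(\tau)}(p)\,p=0,\qquad p\,\partial_{(\tau)}(p)=0,\qquad \partial_{(\tau)}(p)\,p=0,\qquad p\,\bar{\partial}_{(\tau)}(p)=0 .$$ Then $p$ satisfies the field equation $$p\,\Delta(p)-\Delta(p)\,p=0,$$ where $\Delta=g^{\mu\nu}\partial_\mu\partial_\nu$.
   Context: $\mathcal{A}_\theta$ is the unital $*$-algebra of series $a=\sum_{(m,n)\in\mathbb{Z}^2}a_{mn}U_1^mU_2^n$ with $(a_{mn})$ a complex Schwartz (rapidly decreasing) sequence on $\mathbb{Z}^2$, where $U_1,U_2$ are unitaries with $U_2U_1=e^{2\pi i\theta}U_1U_2$. The derivations $\partial_1,\partial_2$ of $\mathcal{A}_\theta$ are defined by $\partial_\mu(U_\nu)=2\pi i\,\delta_\mu^\nu U_\nu$ ($\mu,\nu=1,2$), extended by the Leibniz rule and linearity. The inverse metric associated with $\tau$ is $(g^{\mu\nu})=\frac{1}{(\Im\tau)^2}\begin{pmatrix}|\tau|^2&-\Re\tau\\-\Re\tau&1\end{pmatrix}$, repeated indices summed over $1,2$. The derivations $\partial_{(\tau)}=\frac{1}{\tau-\bar\tau}(-\bar\tau\partial_1+\partial_2)$ and $\bar\partial_{(\tau)}=\frac{1}{\tau-\bar\tau}(\tau\partial_1-\partial_2)$.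 *)

theory Defs
  imports "HOL-Analysis.Analysis"
begin

text \<open>Elements of the smooth noncommutative torus A_theta are represented by their
coefficient sequences a :: int \<times> int \<Rightarrow> complex, where a (m,n) is the coefficient of
U1^m U2^n; they are required to be rapidly decreasing (Schwartz).\<close>

type_synonym nct = "int \<times> int \<Rightarrow> complex"

definition schwartz :: "nct \<Rightarrow> bool" where
  "schwartz a \<longleftrightarrow>
     (\<forall>k::nat. \<exists>C::real. \<forall>m n. (1 + real_of_int (\<bar>m\<bar> + \<bar>n\<bar>)) ^ k * cmod (a (m, n)) \<le> C)"

text \<open>Product: using U2^k U1^m = e^{2 pi i theta k m} U1^m U2^k,
  (U1^j U2^k)(U1^m' U2^n') = e^{2 pi i theta k m'} U1^(j+m') U2^(k+n').\<close>
definition nct_mult :: "real \<Rightarrow> nct \<Rightarrow> nct \<Rightarrow> nct" where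
  "nct_mult \<theta> a b = (\<lambda>(m, n). infsum (\<lambda>(j, k). a (j, k) * b (m - j, n - k)
        * cis (2 * pi * \<theta> * real_of_int (k * (m - j)))) UNIV)"

text \<open>Involution: (U1^m U2^n)^* = U2^(-n) U1^(-m) = e^{2 pi i theta m n} U1^(-m) U2^(-n).\<close>
definition nct_star :: "real \<Rightarrow> nct \<Rightarrow> nct" where
  "nct_star \<theta> a = (\<lambda>(m, n). cnj (a (- m, - n)) * cis (2 * pi * \<theta> * real_of_int (m * n)))"

text \<open>Basic derivations: partial_mu (U_nu) = 2 pi i delta_mu^nu U_nu (mu = 1, 2).\<close>
definition nct_partial :: "nat \<Rightarrow> nct \<Rightarrow> nct" where
  "nct_partial \<mu> a = (\<lambda>(m, n). 2 * of_real pi * \<i> * of_int (if \<mu> = 1 then m else n) * a (m, n))"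

definition dtau :: "complex \<Rightarrow> nct \<Rightarrow> nct" where
  "dtau \<tau> a = (\<lambda>x. (1 / (\<tau> - cnj \<tau>)) * (- cnj \<tau> * nct_partial 1 a x + nct_partial 2 a x))"

definition dbartau :: "complex \<Rightarrow> nct \<Rightarrow> nct" where
  "dbartau \<tau> a = (\<lambda>x. (1 / (\<tau> - cnj \<tau>)) * (\<tau> * nct_partial 1 a x - nct_partial 2 a x))"

definition ginv :: "complex \<Rightarrow> nat \<Rightarrow> nat \<Rightarrow> real" where
  "ginv \<tau> \<mu> \<nu> = (1 / (Im \<tau>)\<^sup>2) *
     (if \<mu> = 1 \<and> \<nu> = 1 then (cmod \<tau>)\<^sup>2 else if \<mu> = 2 \<and> \<nu> = 2 then 1 else - Re \<tau>)"

definition nct_laplacian :: "complex \<Rightarrow> nct \<Rightarrow> nct" where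
  "nct_laplacian \<tau> a = (\<lambda>x. \<Sum>\<mu>\<in>{1,2}. \<Sum>\<nu>\<in>{1,2}.
      of_real (ginv \<tau> \<mu> \<nu>) * nct_partial \<mu> (nct_partial \<nu> a) x)"

end

theory Submission
  imports Defs
begin

text \<open>For self-adjoint \<open>p\<close> the involution turns \<open>dbartau p \<cdot> p = 0\<close> into \<open>p \<cdot> dtau p = 0\<close>
  and \<open>dtau p \<cdot> p = 0\<close> into \<open>p \<cdot> dbartau p = 0\<close>, so one of these two pairs of equations holds.
  Differentiating \<open>p \<cdot> dtau p = 0\<close> by \<open>dbartau\<close> and \<open>dbartau p \<cdot> p = 0\<close> by \<open>dtau\<close> with the
  Leibniz rule, the common term \<open>dbartau p \<cdot> dtau p\<close> cancels and, as the two derivations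
  commute, \<open>p\<close> commutes with \<open>dtau (dbartau p)\<close>, which is a quarter of the Laplacian of \<open>p\<close>.\<close>

definition int_inv_square :: "int \<Rightarrow> real" where
  "int_inv_square j = 1 / (1 + real_of_int \<bar>j\<bar>)\<^sup>2"

lemma summable_on_nat_inv_square: "(\<lambda>n::nat. 1 / (1 + real n)\<^sup>2) summable_on UNIV"
proof -
  have "summable (\<lambda>n::nat. inverse (real n ^ 2))"
    by (rule inverse_power_summable) simp
  then have "summable (\<lambda>n::nat. inverse (real (Suc n) ^ 2))"
    by (subst summable_Suc_iff)
  then have "summable (\<lambda>n::nat. norm (1 / (1 + real n)\<^sup>2))"
    by (simp add: inverse_eq_divide add.commute)
  then show ?thesis
    by (rule norm_summable_imp_summable_on)
qed

lemma summable_on_int_inv_square: "int_inv_square summable_on UNIV"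
proof -
  have UNIV_int: "(UNIV :: int set) = range int \<union> range (\<lambda>n. - int n)"
    by (auto simp: image_def) (metis minus_minus nonneg_int_cases neg_0_le_iff_le linorder_le_cases)
  have "inj (\<lambda>n::nat. - int n)"
    by (auto simp: inj_def)
  then have "int_inv_square summable_on range (\<lambda>n. - int n)"
    by (subst summable_on_reindex) (auto simp: o_def int_inv_square_def summable_on_nat_inv_square)
  moreover have "int_inv_square summable_on range int"
    by (subst summable_on_reindex) (auto simp: o_def int_inv_square_def summable_on_nat_inv_square)
  ultimately show ?thesis
    unfolding UNIV_int by (rule summable_on_union[rotated])
qed

lemma summable_on_int_inv_square_product:
  "(\<lambda>(j, k). int_inv_square j * int_inv_square k) summable_on UNIV"
proof -
  have "(\<lambda>(j, k). int_inv_square j * int_inv_square k) summable_on Sigma UNIV (\<lambda>_. UNIV)"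
  proof (rule summable_on_SigmaI[where g = "\<lambda>j. int_inv_square j * infsum int_inv_square UNIV"])
    show "((\<lambda>k. case (j, k) of (j, k) \<Rightarrow> int_inv_square j * int_inv_square k)
            has_sum int_inv_square j * infsum int_inv_square UNIV) UNIV" for j
      using has_sum_cmult_right[OF has_sum_infsum[OF summable_on_int_inv_square]] by simp
    show "(\<lambda>j. int_inv_square j * infsum int_inv_square UNIV) summable_on UNIV"
      by (rule summable_on_cmult_left[OF summable_on_int_inv_square])
  qed (simp add: int_inv_square_def)
  then show ?thesis
    by simp
qed

lemma schwartzD:
  "schwartz a \<Longrightarrow> \<exists>C. \<forall>m n. (1 + real_of_int (\<bar>m\<bar> + \<bar>n\<bar>)) ^ k * cmod (a (m, n)) \<le> C"
  unfolding schwartz_def by blast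

lemma schwartz_bounded: "schwartz a \<Longrightarrow> \<exists>B. \<forall>x. norm (a x) \<le> B"
  using schwartzD[of a 0] by (auto simp: split_paired_all)

lemma one_plus_product_square_le:
  fixes x y :: real
  assumes "0 \<le> x" "0 \<le> y"
  shows "(1 + x)\<^sup>2 * (1 + y)\<^sup>2 \<le> (1 + (x + y)) ^ 4"
proof -
  have "(1 + x) * (1 + y) \<le> (1 + (x + y))\<^sup>2"
    using assms by (simp add: power2_eq_square algebra_simps)
  then have "((1 + x) * (1 + y))\<^sup>2 \<le> ((1 + (x + y))\<^sup>2)\<^sup>2"
    by (rule power_mono) (use assms in simp)
  then show ?thesis
    by (simp add: power_mult_distrib power_mult[symmetric])
qed

lemma schwartz_norm_summable:
  assumes "schwartz a"
  shows "(\<lambda>x. norm (a x)) summable_on UNIV"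
proof -
  obtain C where C: "\<And>m n. (1 + real_of_int (\<bar>m\<bar> + \<bar>n\<bar>)) ^ 4 * cmod (a (m, n)) \<le> C"
    using schwartzD[OF assms, of 4] by blast
  have "(\<lambda>x. C * (case x of (j, k) \<Rightarrow> int_inv_square j * int_inv_square k)) summable_on UNIV"
    by (rule summable_on_cmult_right[OF summable_on_int_inv_square_product])
  then show ?thesis
  proof (rule summable_on_comparison_test)
    fix x :: "int \<times> int"
    obtain m n where x: "x = (m, n)"
      by fastforce
    have "(1 + real_of_int \<bar>m\<bar>)\<^sup>2 * (1 + real_of_int \<bar>n\<bar>)\<^sup>2 * cmod (a (m, n)) \<le> C"
      using one_plus_product_square_le[of "real_of_int \<bar>m\<bar>" "real_of_int \<bar>n\<bar>"]
      by (intro order_trans[OF mult_right_mono C]) auto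
    moreover have "0 < 1 + real_of_int \<bar>m\<bar>" "0 < 1 + real_of_int \<bar>n\<bar>"
      by auto
    ultimately show "norm (a x) \<le> C * (case x of (j, k) \<Rightarrow> int_inv_square j * int_inv_square k)"
      by (simp add: x int_inv_square_def field_simps)
  qed simp
qed

lemma schwartz_mult_bounded_summable:
  assumes "schwartz a" and "\<And>x. norm (g x) \<le> B"
  shows "(\<lambda>x. a x * g x) summable_on UNIV"
proof -
  have "(\<lambda>x. norm (a x * g x)) summable_on UNIV"
  proof (rule summable_on_comparison_test)
    show "(\<lambda>x. B * norm (a x)) summable_on UNIV"
      by (rule summable_on_cmult_right[OF schwartz_norm_summable[OF assms(1)]])
    show "norm (a x * g x) \<le> B * norm (a x)" for x
      using assms(2)[of x] by (simp add: norm_mult mult.commute[of B] mult_left_mono)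
  qed simp
  then show ?thesis
    by (rule abs_summable_summable)
qed

lemma nct_mult_summand_summable:
  assumes "schwartz a" and "\<And>x. norm (b x) \<le> B"
  shows "(\<lambda>(j, k). a (j, k) * b (m - j, n - k) * cis (2 * pi * \<theta> * real_of_int (k * (m - j))))
           summable_on UNIV"
proof -
  have "(\<lambda>x. a x * (case x of (j, k) \<Rightarrow> b (m - j, n - k) * cis (2 * pi * \<theta> * real_of_int (k * (m - j)))))
          summable_on UNIV"
    using assms by (intro schwartz_mult_bounded_summable[where B = B]) (auto simp: norm_mult split: prod.splits)
  then show ?thesis
    by (simp add: split_def mult.assoc)
qed

text \<open>\<open>nct_deriv \<alpha> \<beta>\<close> is the derivation \<open>(\<alpha> \<partial>\<^sub>1 + \<beta> \<partial>\<^sub>2) / (2\<pi>i)\<close>.\<close>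

definition nct_deriv :: "complex \<Rightarrow> complex \<Rightarrow> nct \<Rightarrow> nct" where
  "nct_deriv \<alpha> \<beta> a = (\<lambda>(m, n). (\<alpha> * of_int m + \<beta> * of_int n) * a (m, n))"

lemma nct_deriv_commute: "nct_deriv \<alpha> \<beta> (nct_deriv \<gamma> \<delta> a) = nct_deriv \<gamma> \<delta> (nct_deriv \<alpha> \<beta> a)"
  by (auto simp: nct_deriv_def fun_eq_iff)

lemma nct_deriv_zero [simp]: "nct_deriv \<alpha> \<beta> (\<lambda>_. 0) = (\<lambda>_. 0)"
  by (auto simp: nct_deriv_def fun_eq_iff)

lemma schwartz_nct_deriv:
  assumes "schwartz a"
  shows "schwartz (nct_deriv \<alpha> \<beta> a)"
  unfolding schwartz_def
proof
  fix k :: nat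
  obtain C where C: "\<And>m n. (1 + real_of_int (\<bar>m\<bar> + \<bar>n\<bar>)) ^ Suc k * cmod (a (m, n)) \<le> C"
    using schwartzD[OF assms, of "Suc k"] by blast
  show "\<exists>C. \<forall>m n. (1 + real_of_int (\<bar>m\<bar> + \<bar>n\<bar>)) ^ k * cmod (nct_deriv \<alpha> \<beta> a (m, n)) \<le> C"
  proof (intro exI allI)
    fix m n :: int
    define s where "s = 1 + real_of_int (\<bar>m\<bar> + \<bar>n\<bar>)"
    have "cmod (\<alpha> * of_int m + \<beta> * of_int n) \<le> cmod \<alpha> * \<bar>real_of_int m\<bar> + cmod \<beta> * \<bar>real_of_int n\<bar>"
      by (rule order_trans[OF norm_triangle_ineq]) (simp add: norm_mult)
    also have "\<dots> \<le> (cmod \<alpha> + cmod \<beta>) * s"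
      by (simp add: s_def algebra_simps add_mono add_increasing mult_left_mono)
    finally have symbol_le: "cmod (\<alpha> * of_int m + \<beta> * of_int n) \<le> (cmod \<alpha> + cmod \<beta>) * s" .
    have decay: "s ^ Suc k * cmod (a (m, n)) \<le> C"
      unfolding s_def by (rule C)
    have "s ^ k * cmod (nct_deriv \<alpha> \<beta> a (m, n))
        = s ^ k * (cmod (\<alpha> * of_int m + \<beta> * of_int n) * cmod (a (m, n)))"
      by (simp add: nct_deriv_def norm_mult)
    also have "\<dots> \<le> s ^ k * ((cmod \<alpha> + cmod \<beta>) * s * cmod (a (m, n)))"
      by (intro mult_left_mono mult_right_mono symbol_le) (auto simp: s_def)
    also have "\<dots> = (cmod \<alpha> + cmod \<beta>) * (s ^ Suc k * cmod (a (m, n)))"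
      by (simp add: algebra_simps)
    also have "\<dots> \<le> (cmod \<alpha> + cmod \<beta>) * C"
      by (intro mult_left_mono decay) simp
    finally show "(1 + real_of_int (\<bar>m\<bar> + \<bar>n\<bar>)) ^ k * cmod (nct_deriv \<alpha> \<beta> a (m, n))
        \<le> (cmod \<alpha> + cmod \<beta>) * C"
      by (simp add: s_def)
  qed
qed

lemma nct_deriv_mult:
  assumes "schwartz a" and "schwartz b"
  shows "nct_deriv \<alpha> \<beta> (nct_mult \<theta> a b)
    = (\<lambda>x. nct_mult \<theta> (nct_deriv \<alpha> \<beta> a) b x + nct_mult \<theta> a (nct_deriv \<alpha> \<beta> b) x)"
proof (rule ext, clarify)
  fix m n :: int
  define c where "c j k = cis (2 * pi * \<theta> * real_of_int (k * (m - j)))" for j k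
  define \<sigma> where "\<sigma> = \<alpha> * of_int m + \<beta> * of_int n"
  obtain B where "\<And>x. norm (b x) \<le> B"
    using schwartz_bounded[OF assms(2)] by blast
  moreover obtain B' where "\<And>x. norm (nct_deriv \<alpha> \<beta> b x) \<le> B'"
    using schwartz_bounded[OF schwartz_nct_deriv[OF assms(2)]] by blast
  ultimately have summable:
    "(\<lambda>(j, k). nct_deriv \<alpha> \<beta> a (j, k) * b (m - j, n - k) * c j k) summable_on UNIV"
    "(\<lambda>(j, k). a (j, k) * nct_deriv \<alpha> \<beta> b (m - j, n - k) * c j k) summable_on UNIV"
    unfolding c_def using assms schwartz_nct_deriv by (blast intro: nct_mult_summand_summable)+
  have "nct_deriv \<alpha> \<beta> (nct_mult \<theta> a b) (m, n)
      = \<sigma> * infsum (\<lambda>(j, k). a (j, k) * b (m - j, n - k) * c j k) UNIV"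
    by (simp add: nct_deriv_def nct_mult_def c_def \<sigma>_def)
  also have "\<dots> = infsum (\<lambda>x. \<sigma> * (case x of (j, k) \<Rightarrow> a (j, k) * b (m - j, n - k) * c j k)) UNIV"
    by (rule infsum_cmult_right'[symmetric])
  also have "\<dots> = infsum (\<lambda>x. (case x of (j, k) \<Rightarrow> nct_deriv \<alpha> \<beta> a (j, k) * b (m - j, n - k) * c j k)
        + (case x of (j, k) \<Rightarrow> a (j, k) * nct_deriv \<alpha> \<beta> b (m - j, n - k) * c j k)) UNIV"
    by (rule infsum_cong) (auto simp: nct_deriv_def \<sigma>_def algebra_simps)
  also have "\<dots> = infsum (\<lambda>(j, k). nct_deriv \<alpha> \<beta> a (j, k) * b (m - j, n - k) * c j k) UNIV
      + infsum (\<lambda>(j, k). a (j, k) * nct_deriv \<alpha> \<beta> b (m - j, n - k) * c j k) UNIV"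
    by (rule infsum_add[OF summable])
  finally show "nct_deriv \<alpha> \<beta> (nct_mult \<theta> a b) (m, n)
      = nct_mult \<theta> (nct_deriv \<alpha> \<beta> a) b (m, n) + nct_mult \<theta> a (nct_deriv \<alpha> \<beta> b) (m, n)"
    by (simp add: nct_mult_def c_def)
qed

lemma nct_mult_scale_left: "nct_mult \<theta> (\<lambda>x. c * a x) b = (\<lambda>x. c * nct_mult \<theta> a b x)"
  unfolding nct_mult_def
  by (auto simp: fun_eq_iff infsum_cmult_right'[symmetric] ac_simps intro!: infsum_cong)

lemma nct_mult_scale_right: "nct_mult \<theta> a (\<lambda>x. c * b x) = (\<lambda>x. c * nct_mult \<theta> a b x)"
  unfolding nct_mult_def
  by (auto simp: fun_eq_iff infsum_cmult_right'[symmetric] ac_simps intro!: infsum_cong)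

lemma nct_star_mult: "nct_star \<theta> (nct_mult \<theta> a b) = nct_mult \<theta> (nct_star \<theta> b) (nct_star \<theta> a)"
proof (rule ext, clarify)
  fix m n :: int
  define e where "e t = cis (2 * pi * \<theta> * real_of_int t)" for t
  define g where "g = (\<lambda>(j, k). cnj (a (j, k) * b (- m - j, - n - k) * e (k * (- m - j))) * e (m * n))"
  define h where "h = (\<lambda>(j, k). nct_star \<theta> b (j, k) * nct_star \<theta> a (m - j, n - k) * e (k * (m - j)))"
  have "nct_star \<theta> (nct_mult \<theta> a b) (m, n) = infsum g UNIV"
    unfolding nct_star_def nct_mult_def g_def e_def
    by (simp add: infsum_cmult_left'[symmetric] split_def infsum_cnj[symmetric] del: infsum_cnj)
  also have "\<dots> = infsum h UNIV"
  proof (rule infsum_reindex_bij_witness[where j = "\<lambda>(j, k). (j + m, k + n)" and i = "\<lambda>(j, k). (j - m, k - n)"])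
    fix x :: "int \<times> int"
    obtain j k where x: "x = (j, k)"
      by fastforce
    have b_argument: "b (- j - m, - k - n) = b (- m - j, - n - k)"
      by (rule arg_cong[where f = b]) simp
    have phase: "e ((j + m) * (k + n)) * e (j * k) * e ((k + n) * - j) = cnj (e (k * (- m - j))) * e (m * n)"
      unfolding e_def cis_cnj cis_mult by (simp add: algebra_simps)
    have "h (j + m, k + n) = cnj (a (j, k)) * cnj (b (- j - m, - k - n))
        * (e ((j + m) * (k + n)) * e (j * k) * e ((k + n) * - j))"
      by (simp add: h_def nct_star_def e_def algebra_simps)
    also have "\<dots> = g (j, k)"
      by (simp only: phase b_argument) (simp add: g_def)
    finally show "h ((\<lambda>(j, k). (j + m, k + n)) x) = g x"
      by (simp add: x)
  qed auto
  finally show "nct_star \<theta> (nct_mult \<theta> a b) (m, n) = nct_mult \<theta> (nct_star \<theta> b) (nct_star \<theta> a) (m, n)"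
    by (simp add: nct_mult_def h_def e_def)
qed

lemma nct_star_deriv: "nct_star \<theta> (nct_deriv \<alpha> \<beta> a) = nct_deriv (- cnj \<alpha>) (- cnj \<beta>) (nct_star \<theta> a)"
  by (auto simp: nct_deriv_def nct_star_def fun_eq_iff algebra_simps)

lemma inverse_diff_cnj_mult_two_pi_i:
  "1 / (\<tau> - cnj \<tau>) * (2 * of_real pi * \<i>) = of_real (pi / Im \<tau>)"
  by (cases "Im \<tau> = 0") (auto simp: complex_diff_cnj field_simps)

lemma dtau_eq_nct_deriv:
  "dtau \<tau> = nct_deriv (- of_real (pi / Im \<tau>) * cnj \<tau>) (of_real (pi / Im \<tau>))"
  unfolding inverse_diff_cnj_mult_two_pi_i[symmetric]
  by (auto simp: dtau_def nct_deriv_def nct_partial_def fun_eq_iff algebra_simps)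

lemma dbartau_eq_nct_deriv:
  "dbartau \<tau> = nct_deriv (of_real (pi / Im \<tau>) * \<tau>) (- of_real (pi / Im \<tau>))"
  unfolding inverse_diff_cnj_mult_two_pi_i[symmetric]
  by (auto simp: dbartau_def nct_deriv_def nct_partial_def fun_eq_iff algebra_simps)

lemma nct_star_dtau: "nct_star \<theta> (dtau \<tau> a) = dbartau \<tau> (nct_star \<theta> a)"
  by (simp add: dtau_eq_nct_deriv dbartau_eq_nct_deriv nct_star_deriv)

lemma nct_star_dbartau: "nct_star \<theta> (dbartau \<tau> a) = dtau \<tau> (nct_star \<theta> a)"
  by (simp add: dtau_eq_nct_deriv dbartau_eq_nct_deriv nct_star_deriv)

lemma dtau_dbartau_commute: "dtau \<tau> (dbartau \<tau> a) = dbartau \<tau> (dtau \<tau> a)"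
  unfolding dtau_eq_nct_deriv dbartau_eq_nct_deriv by (rule nct_deriv_commute)

lemma nct_laplacian_eq_dtau_dbartau:
  assumes "Im \<tau> \<noteq> 0"
  shows "nct_laplacian \<tau> a = (\<lambda>x. 4 * dtau \<tau> (dbartau \<tau> a) x)"
proof (rule ext, clarify)
  fix m n :: int
  obtain x y where \<tau>: "\<tau> = Complex x y"
    by (metis complex.collapse)
  have "y \<noteq> 0" "(cmod \<tau>)\<^sup>2 = x\<^sup>2 + y\<^sup>2"
    using assms by (simp_all add: \<tau> cmod_def)
  then show "nct_laplacian \<tau> a (m, n) = 4 * dtau \<tau> (dbartau \<tau> a) (m, n)"
    unfolding nct_laplacian_def ginv_def nct_partial_def dtau_eq_nct_deriv dbartau_eq_nct_deriv
      nct_deriv_def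
    by (simp add: \<tau> Complex_eq complex_cnj field_simps power2_eq_square)
qed

lemma nct_star_eq_zero_iff: "nct_star \<theta> a = (\<lambda>_. 0) \<longleftrightarrow> a = (\<lambda>_. 0)"
proof
  assume star_zero: "nct_star \<theta> a = (\<lambda>_. 0)"
  have "cnj (a (m, n)) * cis (2 * pi * \<theta> * real_of_int (m * n)) = 0" for m n
    using fun_cong[OF star_zero, of "(- m, - n)"] by (simp add: nct_star_def)
  then show "a = (\<lambda>_. 0)"
    by (auto simp: fun_eq_iff)
qed (simp add: nct_star_def fun_eq_iff)

lemma selfadjoint_dbartau_mult_eq_zero_iff:
  assumes "nct_star \<theta> p = p"
  shows "nct_mult \<theta> (dbartau \<tau> p) p = (\<lambda>_. 0) \<longleftrightarrow> nct_mult \<theta> p (dtau \<tau> p) = (\<lambda>_. 0)"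
  by (subst nct_star_eq_zero_iff[of \<theta>, symmetric]) (simp add: nct_star_mult nct_star_dbartau assms)

lemma selfadjoint_dtau_mult_eq_zero_iff:
  assumes "nct_star \<theta> p = p"
  shows "nct_mult \<theta> (dtau \<tau> p) p = (\<lambda>_. 0) \<longleftrightarrow> nct_mult \<theta> p (dbartau \<tau> p) = (\<lambda>_. 0)"
  by (subst nct_star_eq_zero_iff[of \<theta>, symmetric]) (simp add: nct_star_mult nct_star_dtau assms)

lemma nct_mult_commute_deriv_deriv:
  assumes p: "schwartz p"
    and left_zero: "nct_mult \<theta> (nct_deriv \<alpha> \<beta> p) p = (\<lambda>_. 0)"
    and right_zero: "nct_mult \<theta> p (nct_deriv \<gamma> \<delta> p) = (\<lambda>_. 0)"
  shows "nct_mult \<theta> p (nct_deriv \<alpha> \<beta> (nct_deriv \<gamma> \<delta> p))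
       = nct_mult \<theta> (nct_deriv \<alpha> \<beta> (nct_deriv \<gamma> \<delta> p)) p"
proof -
  define D1 where "D1 = nct_deriv \<alpha> \<beta>"
  define D2 where "D2 = nct_deriv \<gamma> \<delta>"
  have "(\<lambda>x. nct_mult \<theta> (D1 p) (D2 p) x + nct_mult \<theta> p (D1 (D2 p)) x) = D1 (nct_mult \<theta> p (D2 p))"
    unfolding D1_def D2_def by (rule nct_deriv_mult[OF p schwartz_nct_deriv[OF p], symmetric])
  also have "\<dots> = (\<lambda>_. 0)"
    by (simp add: D1_def D2_def right_zero)
  finally have right_sum: "(\<lambda>x. nct_mult \<theta> (D1 p) (D2 p) x + nct_mult \<theta> p (D1 (D2 p)) x) = (\<lambda>_. 0)" .
  have right: "nct_mult \<theta> p (D1 (D2 p)) x = - nct_mult \<theta> (D1 p) (D2 p) x" for x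
    using fun_cong[OF right_sum, of x] by (simp add: eq_neg_iff_add_eq_0 add.commute)
  have "(\<lambda>x. nct_mult \<theta> (D2 (D1 p)) p x + nct_mult \<theta> (D1 p) (D2 p) x) = D2 (nct_mult \<theta> (D1 p) p)"
    unfolding D1_def D2_def by (rule nct_deriv_mult[OF schwartz_nct_deriv[OF p] p, symmetric])
  also have "\<dots> = (\<lambda>_. 0)"
    by (simp add: D1_def D2_def left_zero)
  finally have left_sum: "(\<lambda>x. nct_mult \<theta> (D2 (D1 p)) p x + nct_mult \<theta> (D1 p) (D2 p) x) = (\<lambda>_. 0)" .
  have left: "nct_mult \<theta> (D1 (D2 p)) p x = - nct_mult \<theta> (D1 p) (D2 p) x" for x
    using fun_cong[OF left_sum, of x] by (simp add: eq_neg_iff_add_eq_0 D1_def D2_def nct_deriv_commute)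
  show ?thesis
    using left right by (simp add: D1_def D2_def fun_eq_iff)
qed

theorem mainTheorem2:
  fixes \<theta> :: real and \<tau> :: complex and p :: nct
  assumes "Im \<tau> > 0"
    and "schwartz p"
    and "p = nct_mult \<theta> p p"
    and "p = nct_star \<theta> p"
    and "nct_mult \<theta> (dbartau \<tau> p) p = (\<lambda>_. 0)
         \<or> nct_mult \<theta> p (dtau \<tau> p) = (\<lambda>_. 0)
         \<or> nct_mult \<theta> (dtau \<tau> p) p = (\<lambda>_. 0)
         \<or> nct_mult \<theta> p (dbartau \<tau> p) = (\<lambda>_. 0)"
  shows "(\<lambda>x. nct_mult \<theta> p (nct_laplacian \<tau> p) x - nct_mult \<theta> (nct_laplacian \<tau> p) p x) = (\<lambda>_. 0)"
proof -
  have selfadjoint: "nct_star \<theta> p = p"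
    using assms(4) by simp
  consider "nct_mult \<theta> (dbartau \<tau> p) p = (\<lambda>_. 0)" "nct_mult \<theta> p (dtau \<tau> p) = (\<lambda>_. 0)"
    | "nct_mult \<theta> (dtau \<tau> p) p = (\<lambda>_. 0)" "nct_mult \<theta> p (dbartau \<tau> p) = (\<lambda>_. 0)"
    using assms(5) selfadjoint_dbartau_mult_eq_zero_iff[OF selfadjoint]
      selfadjoint_dtau_mult_eq_zero_iff[OF selfadjoint] by blast
  then have commutes: "nct_mult \<theta> p (dtau \<tau> (dbartau \<tau> p)) = nct_mult \<theta> (dtau \<tau> (dbartau \<tau> p)) p"
  proof cases
    case 1
    then show ?thesis
      unfolding dtau_dbartau_commute unfolding dtau_eq_nct_deriv dbartau_eq_nct_deriv
      by (rule nct_mult_commute_deriv_deriv[OF assms(2)])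
  next
    case 2
    then show ?thesis
      unfolding dtau_eq_nct_deriv dbartau_eq_nct_deriv
      by (rule nct_mult_commute_deriv_deriv[OF assms(2)])
  qed
  have "Im \<tau> \<noteq> 0"
    using assms(1) by simp
  then have "nct_laplacian \<tau> p = (\<lambda>x. 4 * dtau \<tau> (dbartau \<tau> p) x)"
    by (rule nct_laplacian_eq_dtau_dbartau)
  then show ?thesis
    by (simp add: nct_mult_scale_left nct_mult_scale_right commutes)
qed

end
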